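(* Let $X$ be a compact Hausdorff space and let $(\mathcal{A},\mathfrak{T})$ be a unital relaxed C*-algebra. Then the set $C(X)\boxtimes(\mathcal{A},\mathfrak{T})$ of all functions $f\colon X\to\mathcal{A}$ that are norm-bounded and continuous with respect to the relaxed topology $\mathfrak{T}$ is a C*-algebra with respect to the point-wise operations and the supremum norm $\|f\|_\infty=\sup_{x\in X}\|f(x)\|$.
   Context: A relaxed C*-algebra is a pair $(\mathcal{A},\mathfrak{T})$ where $\mathcal{A}$ is a unital C*-algebra and $\mathfrak{T}$ is a locally convex topology on $\mathcal{A}$ (the relaxed topology) determined by a separating family $S$ of norm-continuous seminorms on $\mathcal{A}$, such that multiplication, involution and addition of $\mathcal{A}$ are (jointly) continuous with respect to $\mathfrak{T}$. *)

theory Defs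
  imports "HOL-Analysis.Analysis"
begin

class unital_cstar_algebra = real_normed_algebra_1 + banach +
  fixes scaleC :: "complex \<Rightarrow> 'a \<Rightarrow> 'a"
    and star :: "'a \<Rightarrow> 'a"
  assumes scaleC_add_right: "scaleC c (x + y) = scaleC c x + scaleC c y"
    and scaleC_add_left: "scaleC (c + d) x = scaleC c x + scaleC d x"
    and scaleC_scaleC: "scaleC c (scaleC d x) = scaleC (c * d) x"
    and scaleC_one: "scaleC 1 x = x"
    and scaleR_scaleC: "scaleR r x = scaleC (complex_of_real r) x"
    and norm_scaleC: "norm (scaleC c x) = cmod c * norm x"
    and mult_scaleC_left: "scaleC c x * y = scaleC c (x * y)"
    and mult_scaleC_right: "x * scaleC c y = scaleC c (x * y)"
    and star_star: "star (star x) = x"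
    and star_add: "star (x + y) = star x + star y"
    and star_scaleC: "star (scaleC c x) = scaleC (cnj c) (star x)"
    and star_mult: "star (x * y) = star y * star x"
    and cstar_identity: "norm (star x * x) = norm x ^ 2"

definition cstar_algebra_on ::
  "'b set \<Rightarrow> ('b \<Rightarrow> 'b \<Rightarrow> 'b) \<Rightarrow> 'b \<Rightarrow> ('b \<Rightarrow> 'b) \<Rightarrow> (complex \<Rightarrow> 'b \<Rightarrow> 'b)
    \<Rightarrow> ('b \<Rightarrow> 'b \<Rightarrow> 'b) \<Rightarrow> ('b \<Rightarrow> 'b) \<Rightarrow> ('b \<Rightarrow> real) \<Rightarrow> bool" where
  "cstar_algebra_on C ad zr ng scl mul sr nm \<longleftrightarrow>
     \<comment> \<open>closure\<close>
     zr \<in> C \<and>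
     (\<forall>x\<in>C. \<forall>y\<in>C. ad x y \<in> C \<and> mul x y \<in> C) \<and>
     (\<forall>x\<in>C. ng x \<in> C \<and> sr x \<in> C \<and> (\<forall>c. scl c x \<in> C)) \<and>
     \<comment> \<open>complex associative algebra\<close>
     (\<forall>x\<in>C. \<forall>y\<in>C. \<forall>z\<in>C.
        ad (ad x y) z = ad x (ad y z) \<and>
        mul (mul x y) z = mul x (mul y z) \<and>
        mul x (ad y z) = ad (mul x y) (mul x z) \<and>
        mul (ad x y) z = ad (mul x z) (mul y z)) \<and>
     (\<forall>x\<in>C. \<forall>y\<in>C. ad x y = ad y x) \<and>
     (\<forall>x\<in>C. ad zr x = x \<and> ad (ng x) x = zr) \<and>
     (\<forall>x\<in>C. \<forall>y\<in>C. \<forall>a b.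
        scl a (ad x y) = ad (scl a x) (scl a y) \<and>
        scl (a + b) x = ad (scl a x) (scl b x) \<and>
        scl a (scl b x) = scl (a * b) x \<and>
        scl 1 x = x \<and>
        mul (scl a x) y = scl a (mul x y) \<and>
        mul x (scl a y) = scl a (mul x y)) \<and>
     \<comment> \<open>involution\<close>
     (\<forall>x\<in>C. \<forall>y\<in>C. \<forall>a.
        sr (sr x) = x \<and>
        sr (ad x y) = ad (sr x) (sr y) \<and>
        sr (scl a x) = scl (cnj a) (sr x) \<and>
        sr (mul x y) = mul (sr y) (sr x)) \<and>
     \<comment> \<open>submultiplicative norm with the C*-identity\<close>
     (\<forall>x\<in>C. \<forall>y\<in>C. \<forall>a.
        (nm x = 0 \<longleftrightarrow> x = zr) \<and>
        nm (ad x y) \<le> nm x + nm y \<and>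
        nm (scl a x) = cmod a * nm x \<and>
        nm (mul x y) \<le> nm x * nm y \<and>
        nm (mul (sr x) x) = (nm x) ^ 2) \<and>
     \<comment> \<open>completeness\<close>
     (\<forall>s. (\<forall>n. s n \<in> C) \<and>
          (\<forall>e>0. \<exists>N. \<forall>m\<ge>N. \<forall>n\<ge>N. nm (ad (s m) (ng (s n))) < e)
          \<longrightarrow> (\<exists>l\<in>C. (\<lambda>n. nm (ad (s n) (ng l))) \<longlonglongrightarrow> 0))"

definition is_seminorm :: "('a::unital_cstar_algebra \<Rightarrow> real) \<Rightarrow> bool" where
  "is_seminorm p \<longleftrightarrow> (\<forall>x. 0 \<le> p x) \<and> (\<forall>x y. p (x + y) \<le> p x + p y)
     \<and> (\<forall>c x. p (scaleC c x) = cmod c * p x)"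

definition relaxed_topology :: "('a::unital_cstar_algebra \<Rightarrow> real) set \<Rightarrow> 'a topology" where
  "relaxed_topology S = topology (\<lambda>U. \<forall>x\<in>U. \<exists>F. finite F \<and> F \<subseteq> S \<and>
      (\<exists>e>0. {y. \<forall>p\<in>F. p (y - x) < e} \<subseteq> U))"

definition relaxed_cstar_algebra :: "('a::unital_cstar_algebra \<Rightarrow> real) set \<Rightarrow> bool" where
  "relaxed_cstar_algebra S \<longleftrightarrow>
     (\<forall>p\<in>S. is_seminorm p \<and> continuous_on UNIV p) \<and>
     (\<forall>x. x \<noteq> 0 \<longrightarrow> (\<exists>p\<in>S. p x \<noteq> 0)) \<and>
     continuous_map (prod_topology (relaxed_topology S) (relaxed_topology S)) (relaxed_topology S)
        (\<lambda>(x, y). x + y) \<and>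
     continuous_map (prod_topology (relaxed_topology S) (relaxed_topology S)) (relaxed_topology S)
        (\<lambda>(x, y). x * y) \<and>
     continuous_map (relaxed_topology S) (relaxed_topology S) star"

text \<open>C(X) boxtimes (A, T): norm-bounded, T-continuous functions on the topological space X,
  made extensional (value 0 outside topspace X).\<close>

definition boxtimes :: "'x topology \<Rightarrow> ('a::unital_cstar_algebra \<Rightarrow> real) set \<Rightarrow> ('x \<Rightarrow> 'a) set" where
  "boxtimes X S = {f. continuous_map X (relaxed_topology S) f \<and>
       bounded (f ` topspace X) \<and> (\<forall>x. x \<notin> topspace X \<longrightarrow> f x = 0)}"

definition sup_norm :: "'x topology \<Rightarrow> ('x \<Rightarrow> 'a::real_normed_vector) \<Rightarrow> real" where
  "sup_norm X f = Sup (insert 0 ((\<lambda>x. norm (f x)) ` topspace X))"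

end

theory Submission
  imports Defs
begin

(* Every C*-algebra axiom holds pointwise and passes to the supremum norm, and the operations
   preserve T-continuity because they are jointly T-continuous on A (scalar multiplication because
   the seminorms are homogeneous).  The substantial point is completeness: a sup-norm Cauchy
   sequence converges uniformly in norm; every seminorm in S is norm-continuous, hence small near 0,
   so the convergence is also uniform for each seminorm, and an epsilon/3 argument shows that the
   limit is T-continuous. *)

lemma scaleC_zero_left [simp]: "scaleC 0 (x::'a::unital_cstar_algebra) = 0"
  using scaleR_scaleC[of 0 x] by simp

lemma scaleC_zero_right [simp]: "scaleC c (0::'a::unital_cstar_algebra) = 0"
  using scaleC_add_right[of c "0::'a" 0] by simp

lemma scaleC_minus_one: "scaleC (-1) x = - (x::'a::unital_cstar_algebra)"
  using scaleR_scaleC[of "-1" x] by simp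

lemma scaleC_diff_right: "scaleC c (x - y) = scaleC c x - scaleC c (y::'a::unital_cstar_algebra)"
  using scaleC_add_right[of c "x - y" y] by (simp add: eq_diff_eq)

lemma star_zero [simp]: "star (0::'a::unital_cstar_algebra) = 0"
  using star_add[of "0::'a" 0] by simp

lemma norm_star [simp]: "norm (star (x::'a::unital_cstar_algebra)) = norm x"
proof -
  have le: "norm y \<le> norm (star y)" for y :: 'a
  proof (cases "y = 0")
    case False
    have "norm y ^ 2 \<le> norm (star y) * norm y"
      using cstar_identity[of y] norm_mult_ineq[of "star y" y] by simp
    with False show ?thesis by (simp add: power2_eq_square)
  qed simp
  show ?thesis using le[of x] le[of "star x"] by (simp add: star_star)
qed

lemma bounded_image_normI: "(\<And>x. x \<in> A \<Longrightarrow> norm (f x) \<le> B) \<Longrightarrow> bounded (f ` A)"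
  unfolding bounded_iff by blast

lemma bdd_above_sup_norm:
  "bounded (f ` A) \<Longrightarrow> bdd_above ((\<lambda>x. norm (f x)) ` A)"
  using bdd_above_norm[of "f ` A"] by (simp add: image_image)

lemma norm_le_sup_norm:
  "bounded (f ` topspace X) \<Longrightarrow> x \<in> topspace X \<Longrightarrow> norm (f x) \<le> sup_norm X f"
  unfolding sup_norm_def by (rule cSup_upper) (auto intro: bdd_above_sup_norm)

lemma sup_norm_nonneg: "bounded (f ` topspace X) \<Longrightarrow> 0 \<le> sup_norm X f"
  unfolding sup_norm_def by (rule cSup_upper) (auto intro: bdd_above_sup_norm)

lemma sup_norm_zero [simp]: "sup_norm X (\<lambda>x. 0) = 0"
  unfolding sup_norm_def by (simp add: image_constant_conv)

lemma sup_norm_le: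
  "0 \<le> M \<Longrightarrow> (\<And>x. x \<in> topspace X \<Longrightarrow> norm (f x) \<le> M) \<Longrightarrow> sup_norm X f \<le> M"
  unfolding sup_norm_def by (rule cSup_least) auto

lemma sup_norm_eq_0_iff:
  assumes "bounded (f ` topspace X)"
  shows "sup_norm X f = 0 \<longleftrightarrow> (\<forall>x\<in>topspace X. f x = 0)"
proof
  assume "sup_norm X f = 0"
  then show "\<forall>x\<in>topspace X. f x = 0"
    using norm_le_sup_norm[OF assms] by fastforce
next
  assume "\<forall>x\<in>topspace X. f x = 0"
  then show "sup_norm X f = 0"
    using sup_norm_le[of 0 X f] sup_norm_nonneg[OF assms] by fastforce
qed

lemma sup_norm_add_le:
  assumes "bounded (f ` topspace X)" "bounded (g ` topspace X)"
  shows "sup_norm X (\<lambda>x. f x + g x) \<le> sup_norm X f + sup_norm X g"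
proof (rule sup_norm_le)
  show "0 \<le> sup_norm X f + sup_norm X g"
    using assms by (simp add: sup_norm_nonneg)
  fix x assume "x \<in> topspace X"
  then show "norm (f x + g x) \<le> sup_norm X f + sup_norm X g"
    using assms norm_le_sup_norm by (metis norm_triangle_le add_mono)
qed

lemma norm_mult_le_sup_norm:
  fixes f g :: "'x \<Rightarrow> 'a::real_normed_algebra"
  assumes "bounded (f ` topspace X)" "bounded (g ` topspace X)" "x \<in> topspace X"
  shows "norm (f x * g x) \<le> sup_norm X f * sup_norm X g"
  using norm_mult_ineq[of "f x" "g x"]
    mult_mono[OF norm_le_sup_norm[OF assms(1,3)] norm_le_sup_norm[OF assms(2,3)]
      sup_norm_nonneg[OF assms(1)] norm_ge_zero]
  by linarith

lemma bounded_mult_comp: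
  fixes f g :: "'x \<Rightarrow> 'a::real_normed_algebra"
  assumes "bounded (f ` topspace X)" "bounded (g ` topspace X)"
  shows "bounded ((\<lambda>x. f x * g x) ` topspace X)"
  using norm_mult_le_sup_norm[OF assms] by (rule bounded_image_normI)

lemma sup_norm_mult_le:
  fixes f g :: "'x \<Rightarrow> 'a::real_normed_algebra"
  assumes "bounded (f ` topspace X)" "bounded (g ` topspace X)"
  shows "sup_norm X (\<lambda>x. f x * g x) \<le> sup_norm X f * sup_norm X g"
  using norm_mult_le_sup_norm[OF assms] assms
  by (intro sup_norm_le) (simp_all add: sup_norm_nonneg)

lemma bounded_scaleC_comp:
  fixes f :: "'x \<Rightarrow> 'a::unital_cstar_algebra"
  assumes "bounded (f ` A)"
  shows "bounded ((\<lambda>x. scaleC c (f x)) ` A)"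
proof -
  obtain B where "\<And>x. x \<in> A \<Longrightarrow> norm (f x) \<le> B"
    using assms unfolding bounded_iff by blast
  then show ?thesis
    by (intro bounded_image_normI[of _ _ "cmod c * B"]) (simp add: norm_scaleC mult_left_mono)
qed

lemma sup_norm_scaleC:
  fixes f :: "'x \<Rightarrow> 'a::unital_cstar_algebra"
  assumes f: "bounded (f ` topspace X)"
  shows "sup_norm X (\<lambda>x. scaleC c (f x)) = cmod c * sup_norm X f"
proof (cases "c = 0")
  case True
  then show ?thesis
    by simp
next
  case False
  have cf: "bounded ((\<lambda>x. scaleC c (f x)) ` topspace X)"
    using f by (rule bounded_scaleC_comp)
  show ?thesis
  proof (rule antisym)
    show "sup_norm X (\<lambda>x. scaleC c (f x)) \<le> cmod c * sup_norm X f"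
    proof (rule sup_norm_le)
      show "0 \<le> cmod c * sup_norm X f"
        using sup_norm_nonneg[OF f] by simp
      fix x assume "x \<in> topspace X"
      then show "norm (scaleC c (f x)) \<le> cmod c * sup_norm X f"
        using norm_le_sup_norm[OF f] by (simp add: norm_scaleC mult_left_mono)
    qed
    have "sup_norm X f \<le> sup_norm X (\<lambda>x. scaleC c (f x)) / cmod c"
    proof (rule sup_norm_le)
      show "0 \<le> sup_norm X (\<lambda>x. scaleC c (f x)) / cmod c"
        using sup_norm_nonneg[OF cf] by simp
      fix x assume "x \<in> topspace X"
      then have "cmod c * norm (f x) \<le> sup_norm X (\<lambda>x. scaleC c (f x))"
        using norm_le_sup_norm[OF cf] by (simp add: norm_scaleC)
      then show "norm (f x) \<le> sup_norm X (\<lambda>x. scaleC c (f x)) / cmod c"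
        using False by (simp add: field_simps)
    qed
    then show "cmod c * sup_norm X f \<le> sup_norm X (\<lambda>x. scaleC c (f x))"
      using False by (simp add: field_simps)
  qed
qed

lemma bounded_star_comp [simp]:
  "bounded ((\<lambda>x. star (f x)) ` A) \<longleftrightarrow> bounded (f ` (A::'x set))"
  for f :: "'x \<Rightarrow> 'a::unital_cstar_algebra"
  using bounded_norm_comp[of "\<lambda>x. star (f x)"] bounded_norm_comp[of f] by simp

lemma sup_norm_cstar:
  fixes f :: "'x \<Rightarrow> 'a::unital_cstar_algebra"
  assumes f: "bounded (f ` topspace X)"
  shows "sup_norm X (\<lambda>x. star (f x) * f x) = sup_norm X f ^ 2"
proof (rule antisym)
  show "sup_norm X (\<lambda>x. star (f x) * f x) \<le> sup_norm X f ^ 2"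
  proof (rule sup_norm_le)
    fix x assume "x \<in> topspace X"
    then show "norm (star (f x) * f x) \<le> sup_norm X f ^ 2"
      using norm_le_sup_norm[OF f] by (simp add: cstar_identity power_mono)
  qed simp
  have sf: "bounded ((\<lambda>x. star (f x) * f x) ` topspace X)"
    using f by (intro bounded_mult_comp) simp_all
  have "sup_norm X f \<le> sqrt (sup_norm X (\<lambda>x. star (f x) * f x))"
  proof (rule sup_norm_le)
    show "0 \<le> sqrt (sup_norm X (\<lambda>x. star (f x) * f x))"
      using sup_norm_nonneg[OF sf] by simp
    fix x assume "x \<in> topspace X"
    then have "norm (f x) ^ 2 \<le> sup_norm X (\<lambda>x. star (f x) * f x)"
      using norm_le_sup_norm[OF sf] by (simp add: cstar_identity)
    then show "norm (f x) \<le> sqrt (sup_norm X (\<lambda>x. star (f x) * f x))"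
      by (rule real_le_rsqrt)
  qed
  then show "sup_norm X f ^ 2 \<le> sup_norm X (\<lambda>x. star (f x) * f x)"
    using sup_norm_nonneg[OF f] sup_norm_nonneg[OF sf] by (metis power_mono real_sqrt_pow2)
qed

lemma uniformly_Cauchy_on_sup_norm:
  fixes s :: "nat \<Rightarrow> 'x \<Rightarrow> 'b::real_normed_vector"
  assumes "\<And>m n. bounded ((\<lambda>x. s m x - s n x) ` topspace X)"
    and "\<forall>e>0. \<exists>N. \<forall>m\<ge>N. \<forall>n\<ge>N. sup_norm X (\<lambda>x. s m x - s n x) < e"
  shows "uniformly_Cauchy_on (topspace X) s"
proof (rule uniformly_Cauchy_onI)
  fix e :: real assume "e > 0"
  then obtain N where "\<forall>m\<ge>N. \<forall>n\<ge>N. sup_norm X (\<lambda>x. s m x - s n x) < e"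
    using assms(2) by blast
  then have "dist (s m x) (s n x) < e" if "x \<in> topspace X" "m \<ge> N" "n \<ge> N" for x m n
    using norm_le_sup_norm[OF assms(1) that(1), of m n] that(2,3) unfolding dist_norm
    by (meson le_less_trans)
  then show "\<exists>N. \<forall>x\<in>topspace X. \<forall>m\<ge>N. \<forall>n\<ge>N. dist (s m x) (s n x) < e"
    by blast
qed

lemma bounded_uniform_limit:
  fixes s :: "nat \<Rightarrow> 'x \<Rightarrow> 'b::real_normed_vector"
  assumes "uniform_limit A s l sequentially" "\<And>n. bounded (s n ` A)"
  shows "bounded (l ` A)"
proof -
  obtain N where "\<forall>x\<in>A. dist (s N x) (l x) < 1"
    using assms(1) unfolding uniform_limit_sequentially_iff by (meson le_refl zero_less_one)
  then have "bounded ((\<lambda>x. l x - s N x) ` A)"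
    by (intro bounded_image_normI[of _ _ 1]) (simp add: dist_norm norm_minus_commute less_imp_le)
  from bounded_plus_comp[OF assms(2)[of N] this] show ?thesis
    by simp
qed

lemma tendsto_sup_norm_uniform_limit:
  fixes s :: "nat \<Rightarrow> 'x \<Rightarrow> 'b::real_normed_vector"
  assumes "uniform_limit (topspace X) s l sequentially"
  shows "(\<lambda>n. sup_norm X (\<lambda>x. s n x - l x)) \<longlonglongrightarrow> 0"
proof (rule LIMSEQ_I)
  fix e :: real assume "e > 0"
  then obtain N where N: "\<And>n x. n \<ge> N \<Longrightarrow> x \<in> topspace X \<Longrightarrow> norm (s n x - l x) < e / 2"
    using assms half_gt_zero unfolding uniform_limit_sequentially_iff dist_norm by metis
  have "norm (sup_norm X (\<lambda>x. s n x - l x)) < e" if "n \<ge> N" for n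
  proof -
    have "bounded ((\<lambda>x. s n x - l x) ` topspace X)"
      using N[OF that] by (intro bounded_image_normI) (rule less_imp_le)
    moreover have "sup_norm X (\<lambda>x. s n x - l x) \<le> e / 2"
      using N[OF that] \<open>e > 0\<close> by (intro sup_norm_le) (auto intro: less_imp_le)
    ultimately show ?thesis
      using sup_norm_nonneg \<open>e > 0\<close> by fastforce
  qed
  then show "\<exists>N. \<forall>n\<ge>N. norm (sup_norm X (\<lambda>x. s n x - l x) - 0) < e"
    by auto
qed

lemma seminorm_nonneg: "is_seminorm p \<Longrightarrow> 0 \<le> p x"
  unfolding is_seminorm_def by blast

lemma seminorm_zero: "is_seminorm p \<Longrightarrow> p 0 = 0"
  unfolding is_seminorm_def using scaleC_zero_left[of "0::'a::unital_cstar_algebra"]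
  by (metis mult_zero_left norm_zero)

lemma seminorm_minus: "is_seminorm p \<Longrightarrow> p (- x) = p (x::'a::unital_cstar_algebra)"
  unfolding is_seminorm_def by (metis scaleC_minus_one norm_minus_cancel norm_one mult_1)

lemma seminorm_diff_commute: "is_seminorm p \<Longrightarrow> p (x - y) = p (y - (x::'a::unital_cstar_algebra))"
  using seminorm_minus[of p "x - y"] by simp

lemma seminorm_diff_triangle:
  "is_seminorm p \<Longrightarrow> p (x - z) \<le> p (x - y) + p (y - (z::'a::unital_cstar_algebra))"
  unfolding is_seminorm_def by (metis diff_add_cancel add_diff_eq diff_diff_eq2)

lemma seminorm_scaleC_diff:
  "is_seminorm p \<Longrightarrow> p (scaleC c x - scaleC c y) = cmod c * p (x - (y::'a::unital_cstar_algebra))"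
  unfolding is_seminorm_def by (simp add: scaleC_diff_right[symmetric])

lemma continuous_seminorm_small_near_zero:
  fixes p :: "'a::unital_cstar_algebra \<Rightarrow> real"
  assumes "is_seminorm p" "continuous_on UNIV p" "e > 0"
  obtains d where "d > 0" "\<And>z. norm z < d \<Longrightarrow> p z < e"
proof -
  obtain d where "d > 0" "\<And>z. dist z 0 < d \<Longrightarrow> dist (p z) (p 0) < e"
    using assms(2,3) unfolding continuous_on_iff by blast
  with that show ?thesis
    using seminorm_nonneg[OF assms(1)] seminorm_zero[OF assms(1)] by (simp add: dist_norm)
qed

lemma istopology_relaxed:
  fixes S :: "('a::unital_cstar_algebra \<Rightarrow> real) set"
  shows "istopology (\<lambda>U. \<forall>x\<in>U. \<exists>F. finite F \<and> F \<subseteq> S \<and>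
      (\<exists>e>0. {y. \<forall>p\<in>F. p (y - x) < e} \<subseteq> U))"
  unfolding istopology_def
proof (intro conjI allI impI ballI)
  fix U V :: "'a set" and x
  assume "\<forall>x\<in>U. \<exists>F. finite F \<and> F \<subseteq> S \<and> (\<exists>e>0. {y. \<forall>p\<in>F. p (y - x) < e} \<subseteq> U)"
    and "\<forall>x\<in>V. \<exists>F. finite F \<and> F \<subseteq> S \<and> (\<exists>e>0. {y. \<forall>p\<in>F. p (y - x) < e} \<subseteq> V)"
    and "x \<in> U \<inter> V"
  then obtain F1 F2 and e1 e2 :: real
    where "finite F1" "F1 \<subseteq> S" "e1 > 0" "{y. \<forall>p\<in>F1. p (y - x) < e1} \<subseteq> U"
      and "finite F2" "F2 \<subseteq> S" "e2 > 0" "{y. \<forall>p\<in>F2. p (y - x) < e2} \<subseteq> V"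
    by (meson IntD1 IntD2)
  moreover have "{y. \<forall>p\<in>F1 \<union> F2. p (y - x) < min e1 e2}
      \<subseteq> {y. \<forall>p\<in>F1. p (y - x) < e1} \<inter> {y. \<forall>p\<in>F2. p (y - x) < e2}"
    by auto
  ultimately show "\<exists>F. finite F \<and> F \<subseteq> S \<and> (\<exists>e>0. {y. \<forall>p\<in>F. p (y - x) < e} \<subseteq> U \<inter> V)"
    by (intro exI[of _ "F1 \<union> F2"] conjI exI[of _ "min e1 e2"]) auto
next
  fix K :: "'a set set" and x
  assume "\<forall>U\<in>K. \<forall>x\<in>U. \<exists>F. finite F \<and> F \<subseteq> S \<and> (\<exists>e>0. {y. \<forall>p\<in>F. p (y - x) < e} \<subseteq> U)"
    and "x \<in> \<Union>K"
  then show "\<exists>F. finite F \<and> F \<subseteq> S \<and> (\<exists>e>0. {y. \<forall>p\<in>F. p (y - x) < e} \<subseteq> \<Union>K)"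
    by (meson UnionE Union_upper order_trans)
qed

lemma openin_relaxed_topology:
  "openin (relaxed_topology S) U \<longleftrightarrow>
    (\<forall>x\<in>U. \<exists>F. finite F \<and> F \<subseteq> S \<and> (\<exists>e>0. {y. \<forall>p\<in>F. p (y - x) < e} \<subseteq> U))"
  unfolding relaxed_topology_def by (simp add: istopology_relaxed)

lemma topspace_relaxed_topology [simp]: "topspace (relaxed_topology S) = UNIV"
proof -
  have "openin (relaxed_topology S) UNIV"
    unfolding openin_relaxed_topology by (intro ballI exI[of _ "{}"] conjI exI[of _ 1]) auto
  then show ?thesis
    using openin_subset by blast
qed

lemma openin_relaxed_topology_ball:
  fixes S :: "('a::unital_cstar_algebra \<Rightarrow> real) set" and e :: real
  assumes S: "\<forall>p\<in>S. is_seminorm p" and F: "finite F" "F \<subseteq> S" and "e > 0"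
  shows "openin (relaxed_topology S) {y. \<forall>p\<in>F. p (y - a) < e}"
  unfolding openin_relaxed_topology
proof
  fix z assume z: "z \<in> {y. \<forall>p\<in>F. p (y - a) < e}"
  define M where "M = Max (insert 0 ((\<lambda>p. p (z - a)) ` F))"
  have "M < e"
    using Max_in[of "insert 0 ((\<lambda>p. p (z - a)) ` F)"] F z \<open>e > 0\<close> by (auto simp: M_def)
  moreover have "p (y - a) < e" if "p \<in> F" "p (y - z) < e - M" for p y
  proof -
    have "p (z - a) \<le> M"
      using F that(1) by (simp add: M_def)
    with that seminorm_diff_triangle[of p y a z] S F show ?thesis
      by fastforce
  qed
  ultimately show "\<exists>F'. finite F' \<and> F' \<subseteq> S \<and>
      (\<exists>e'>0. {y. \<forall>p\<in>F'. p (y - z) < e'} \<subseteq> {y. \<forall>p\<in>F. p (y - a) < e})"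
    using F by (intro exI[of _ F] conjI exI[of _ "e - M"]) auto
qed

lemma continuous_map_relaxed_topologyI:
  fixes S :: "('a::unital_cstar_algebra \<Rightarrow> real) set" and f :: "'x \<Rightarrow> 'a"
  assumes nbhd: "\<And>x F e. x \<in> topspace X \<Longrightarrow> finite F \<Longrightarrow> F \<subseteq> S \<Longrightarrow> (e::real) > 0 \<Longrightarrow>
    \<exists>V. openin X V \<and> x \<in> V \<and> (\<forall>y\<in>V. \<forall>p\<in>F. p (f y - f x) < e)"
  shows "continuous_map X (relaxed_topology S) f"
  unfolding continuous_map_def
proof (intro conjI allI impI)
  fix U assume "openin (relaxed_topology S) U"
  then have U: "\<forall>x\<in>U. \<exists>F. finite F \<and> F \<subseteq> S \<and> (\<exists>e>0. {y. \<forall>p\<in>F. p (y - x) < e} \<subseteq> U)"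
    by (simp add: openin_relaxed_topology)
  show "openin X {x \<in> topspace X. f x \<in> U}"
  proof (subst openin_subopen, intro ballI)
    fix x assume x: "x \<in> {x \<in> topspace X. f x \<in> U}"
    then have "\<exists>F. finite F \<and> F \<subseteq> S \<and> (\<exists>e>0. {y. \<forall>p\<in>F. p (y - f x) < e} \<subseteq> U)"
      using U by simp
    then obtain F and e :: real
      where F: "finite F" "F \<subseteq> S" "e > 0" and sub: "{y. \<forall>p\<in>F. p (y - f x) < e} \<subseteq> U"
      by blast
    obtain V where V: "openin X V" "x \<in> V" "\<forall>y\<in>V. \<forall>p\<in>F. p (f y - f x) < e"
      using nbhd[OF _ F] x by blast
    have "V \<subseteq> {x \<in> topspace X. f x \<in> U}"
    proof
      fix y assume "y \<in> V"
      then have "y \<in> topspace X" "f y \<in> {y. \<forall>p\<in>F. p (y - f x) < e}"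
        using openin_subset[OF V(1)] V(3) by auto
      with sub show "y \<in> {x \<in> topspace X. f x \<in> U}"
        by blast
    qed
    with V show "\<exists>T. openin X T \<and> x \<in> T \<and> T \<subseteq> {x \<in> topspace X. f x \<in> U}"
      by blast
  qed
qed auto

lemma continuous_map_relaxed_topologyD:
  fixes S :: "('a::unital_cstar_algebra \<Rightarrow> real) set" and f :: "'x \<Rightarrow> 'a" and e :: real
  assumes S: "\<forall>p\<in>S. is_seminorm p" and f: "continuous_map X (relaxed_topology S) f"
    and x: "x \<in> topspace X" and F: "finite F" "F \<subseteq> S" and "e > 0"
  shows "\<exists>V. openin X V \<and> x \<in> V \<and> (\<forall>y\<in>V. \<forall>p\<in>F. p (f y - f x) < e)"
proof -
  let ?V = "{y \<in> topspace X. f y \<in> {z. \<forall>p\<in>F. p (z - f x) < e}}"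
  have "openin X ?V"
    using f openin_relaxed_topology_ball[OF S F \<open>e > 0\<close>] by (rule openin_continuous_map_preimage)
  moreover have "x \<in> ?V"
  proof -
    have "p (f x - f x) < e" if "p \<in> F" for p
      using that F S \<open>e > 0\<close> seminorm_zero[of p] by auto
    with x show ?thesis
      by simp
  qed
  moreover have "\<forall>y\<in>?V. \<forall>p\<in>F. p (f y - f x) < e"
    by simp
  ultimately show ?thesis
    by blast
qed

lemma continuous_map_relaxed_scaleC:
  fixes S :: "('a::unital_cstar_algebra \<Rightarrow> real) set"
  assumes S: "\<forall>p\<in>S. is_seminorm p"
  shows "continuous_map (relaxed_topology S) (relaxed_topology S) (scaleC c)"
proof (rule continuous_map_relaxed_topologyI)
  fix a F and e :: real
  assume F: "finite F" "F \<subseteq> S" and "e > 0"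
  have c1: "cmod c + 1 > 0"
    using norm_ge_zero[of c] by linarith
  define d where "d = e / (cmod c + 1)"
  have "d > 0"
    using \<open>e > 0\<close> c1 by (simp add: d_def)
  let ?V = "{y. \<forall>p\<in>F. p (y - a) < d}"
  have "openin (relaxed_topology S) ?V"
    using openin_relaxed_topology_ball[OF S F \<open>d > 0\<close>] .
  moreover have "a \<in> ?V"
    using F S \<open>d > 0\<close> by (auto simp: seminorm_zero)
  moreover have "p (scaleC c y - scaleC c a) < e" if "y \<in> ?V" "p \<in> F" for y p
  proof -
    have p: "is_seminorm p"
      using that(2) F S by blast
    have "p (scaleC c y - scaleC c a) = cmod c * p (y - a)"
      using seminorm_scaleC_diff[OF p] .
    also have "\<dots> \<le> (cmod c + 1) * p (y - a)"
      using seminorm_nonneg[OF p] by (simp add: distrib_right)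
    also have "\<dots> < (cmod c + 1) * d"
      using that c1 by (intro mult_strict_left_mono) auto
    also have "\<dots> = e"
      using c1 by (simp add: d_def)
    finally show ?thesis .
  qed
  ultimately show "\<exists>V. openin (relaxed_topology S) V \<and> a \<in> V \<and>
      (\<forall>y\<in>V. \<forall>p\<in>F. p (scaleC c y - scaleC c a) < e)"
    by blast
qed

lemma relaxed_cstar_algebraD:
  assumes "relaxed_cstar_algebra S"
  shows "\<And>p. p \<in> S \<Longrightarrow> is_seminorm p" "\<And>p. p \<in> S \<Longrightarrow> continuous_on UNIV p"
    and "continuous_map (prod_topology (relaxed_topology S) (relaxed_topology S)) (relaxed_topology S)
        (\<lambda>(x, y). x + y)"
    and "continuous_map (prod_topology (relaxed_topology S) (relaxed_topology S)) (relaxed_topology S)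
        (\<lambda>(x, y). x * y)"
    and "continuous_map (relaxed_topology S) (relaxed_topology S) star"
  using assms unfolding relaxed_cstar_algebra_def by simp_all

context
  fixes S :: "('a::unital_cstar_algebra \<Rightarrow> real) set" and X :: "'x topology"
  assumes S: "relaxed_cstar_algebra S"
begin

lemma continuous_map_relaxed_add:
  assumes "continuous_map X (relaxed_topology S) f" "continuous_map X (relaxed_topology S) g"
  shows "continuous_map X (relaxed_topology S) (\<lambda>x. f x + g x)"
proof -
  from continuous_map_compose[OF continuous_map_pairedI[OF assms] relaxed_cstar_algebraD(3)[OF S]]
  show ?thesis
    by (simp add: o_def)
qed

lemma continuous_map_relaxed_mult:
  assumes "continuous_map X (relaxed_topology S) f" "continuous_map X (relaxed_topology S) g"
  shows "continuous_map X (relaxed_topology S) (\<lambda>x. f x * g x)"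
proof -
  from continuous_map_compose[OF continuous_map_pairedI[OF assms] relaxed_cstar_algebraD(4)[OF S]]
  show ?thesis
    by (simp add: o_def)
qed

lemma continuous_map_relaxed_star:
  assumes "continuous_map X (relaxed_topology S) f"
  shows "continuous_map X (relaxed_topology S) (\<lambda>x. star (f x))"
proof -
  from continuous_map_compose[OF assms relaxed_cstar_algebraD(5)[OF S]] show ?thesis
    by (simp add: o_def)
qed

lemma continuous_map_relaxed_scaleC_comp:
  assumes "continuous_map X (relaxed_topology S) f"
  shows "continuous_map X (relaxed_topology S) (\<lambda>x. scaleC c (f x))"
proof -
  have "\<forall>p\<in>S. is_seminorm p"
    using relaxed_cstar_algebraD(1)[OF S] by blast
  from continuous_map_compose[OF assms continuous_map_relaxed_scaleC[OF this]] show ?thesis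
    by (simp add: o_def)
qed

lemma boxtimes_add:
  "f \<in> boxtimes X S \<Longrightarrow> g \<in> boxtimes X S \<Longrightarrow> (\<lambda>x. f x + g x) \<in> boxtimes X S"
  unfolding boxtimes_def by (auto intro: continuous_map_relaxed_add bounded_plus_comp)

lemma boxtimes_mult:
  "f \<in> boxtimes X S \<Longrightarrow> g \<in> boxtimes X S \<Longrightarrow> (\<lambda>x. f x * g x) \<in> boxtimes X S"
  unfolding boxtimes_def by (auto intro: continuous_map_relaxed_mult bounded_mult_comp)

lemma boxtimes_star: "f \<in> boxtimes X S \<Longrightarrow> (\<lambda>x. star (f x)) \<in> boxtimes X S"
  unfolding boxtimes_def by (auto intro: continuous_map_relaxed_star)

lemma boxtimes_scaleC: "f \<in> boxtimes X S \<Longrightarrow> (\<lambda>x. scaleC c (f x)) \<in> boxtimes X S"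
  unfolding boxtimes_def by (auto intro: continuous_map_relaxed_scaleC_comp bounded_scaleC_comp)

lemma boxtimes_uminus: "f \<in> boxtimes X S \<Longrightarrow> (\<lambda>x. - f x) \<in> boxtimes X S"
  using boxtimes_scaleC[of f "-1"] by (simp add: scaleC_minus_one)

end

lemma eventually_seminorm_uniform_limit:
  fixes s :: "nat \<Rightarrow> 'x \<Rightarrow> 'a::unital_cstar_algebra"
  assumes "is_seminorm p" "continuous_on UNIV p"
    and lim: "uniform_limit A s l sequentially" and "e > 0"
  shows "\<forall>\<^sub>F n in sequentially. \<forall>y\<in>A. p (s n y - l y) < e"
proof -
  obtain d where "d > 0" and d: "\<And>z. norm z < d \<Longrightarrow> p z < e"
    using continuous_seminorm_small_near_zero[OF assms(1,2,4)] by blast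
  show ?thesis
    using uniform_limitD[OF lim \<open>d > 0\<close>] by eventually_elim (use d in \<open>simp add: dist_norm\<close>)
qed

lemma continuous_map_relaxed_uniform_limit:
  fixes s :: "nat \<Rightarrow> 'x \<Rightarrow> 'a::unital_cstar_algebra"
  assumes S: "\<forall>p\<in>S. is_seminorm p \<and> continuous_on UNIV p"
    and s: "\<And>n. continuous_map X (relaxed_topology S) (s n)"
    and lim: "uniform_limit (topspace X) s l sequentially"
  shows "continuous_map X (relaxed_topology S) l"
proof (rule continuous_map_relaxed_topologyI)
  fix x F and e :: real
  assume x: "x \<in> topspace X" and F: "finite F" "F \<subseteq> S" and "e > 0"
  have seminorms: "\<forall>p\<in>S. is_seminorm p"
    using S by blast
  have "e / 3 > 0"
    using \<open>e > 0\<close> by simp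
  then have "\<forall>\<^sub>F n in sequentially. \<forall>y\<in>topspace X. p (s n y - l y) < e / 3" if "p \<in> F" for p
    using F S that by (intro eventually_seminorm_uniform_limit[OF _ _ lim]) auto
  then have "\<forall>\<^sub>F n in sequentially. \<forall>p\<in>F. \<forall>y\<in>topspace X. p (s n y - l y) < e / 3"
    using F(1) by (simp add: eventually_ball_finite)
  then obtain n where n: "\<And>p y. p \<in> F \<Longrightarrow> y \<in> topspace X \<Longrightarrow> p (s n y - l y) < e / 3"
    unfolding eventually_sequentially by blast
  obtain V where V: "openin X V" "x \<in> V" "\<forall>y\<in>V. \<forall>p\<in>F. p (s n y - s n x) < e / 3"
    using continuous_map_relaxed_topologyD[OF seminorms s[of n] x F \<open>e / 3 > 0\<close>] by blast
  have "p (l y - l x) < e" if "y \<in> V" "p \<in> F" for y p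
  proof -
    have p: "is_seminorm p"
      using that(2) F seminorms by blast
    have y: "y \<in> topspace X"
      using that(1) openin_subset[OF V(1)] by blast
    have "p (l y - l x) \<le> p (l y - s n y) + p (s n y - s n x) + p (s n x - l x)"
      using seminorm_diff_triangle[OF p, of "l y" "l x" "s n y"]
        seminorm_diff_triangle[OF p, of "s n y" "l x" "s n x"] by linarith
    moreover have "p (l y - s n y) < e / 3"
      using n[OF that(2) y] seminorm_diff_commute[OF p] by simp
    ultimately show ?thesis
      using n[OF that(2) x] V(3) that by fastforce
  qed
  with V show "\<exists>V. openin X V \<and> x \<in> V \<and> (\<forall>y\<in>V. \<forall>p\<in>F. p (l y - l x) < e)"
    by blast
qed

lemma boxtimes_bounded: "f \<in> boxtimes X S \<Longrightarrow> bounded (f ` topspace X)"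
  by (simp add: boxtimes_def)

lemma zero_in_boxtimes: "(\<lambda>x. 0) \<in> boxtimes X S"
  by (simp add: boxtimes_def image_constant_conv)

lemma boxtimes_sup_norm_eq_0_iff:
  "f \<in> boxtimes X S \<Longrightarrow> sup_norm X f = 0 \<longleftrightarrow> f = (\<lambda>x. 0)"
  unfolding boxtimes_def by (auto simp: sup_norm_eq_0_iff)

lemma boxtimes_complete:
  fixes s :: "nat \<Rightarrow> 'x \<Rightarrow> 'a::unital_cstar_algebra"
  assumes S: "relaxed_cstar_algebra S" and s: "\<And>n. s n \<in> boxtimes X S"
    and Cauchy: "\<forall>e>0. \<exists>N. \<forall>m\<ge>N. \<forall>n\<ge>N. sup_norm X (\<lambda>x. s m x - s n x) < e"
  shows "\<exists>l\<in>boxtimes X S. (\<lambda>n. sup_norm X (\<lambda>x. s n x - l x)) \<longlonglongrightarrow> 0"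
proof -
  have "uniformly_Cauchy_on (topspace X) s"
    using Cauchy boxtimes_bounded[OF s] by (intro uniformly_Cauchy_on_sup_norm bounded_minus_comp)
  then obtain l0 where "uniform_limit (topspace X) s l0 sequentially"
    using Cauchy_uniformly_convergent unfolding uniformly_convergent_on_def by blast
  define l where "l x = (if x \<in> topspace X then l0 x else 0)" for x
  have lim: "uniform_limit (topspace X) s l sequentially"
    using \<open>uniform_limit (topspace X) s l0 sequentially\<close> uniform_limit_cong'[of "topspace X" s s l0 l]
    by (simp add: l_def)
  have "\<forall>p\<in>S. is_seminorm p \<and> continuous_on UNIV p"
    using relaxed_cstar_algebraD(1,2)[OF S] by blast
  moreover have "continuous_map X (relaxed_topology S) (s n)" for n
    using s[of n] by (simp add: boxtimes_def)
  ultimately have "continuous_map X (relaxed_topology S) l"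
    using lim by (rule continuous_map_relaxed_uniform_limit)
  moreover have "bounded (l ` topspace X)"
    using lim boxtimes_bounded[OF s] by (rule bounded_uniform_limit)
  ultimately have "l \<in> boxtimes X S"
    by (simp add: boxtimes_def l_def)
  with tendsto_sup_norm_uniform_limit[OF lim] show ?thesis
    by blast
qed

theorem lemma1:
  fixes X :: "'x topology" and S :: "('a::unital_cstar_algebra \<Rightarrow> real) set"
  assumes "compact_space X" and "Hausdorff_space X"
    and "relaxed_cstar_algebra S"
  shows "cstar_algebra_on (boxtimes X S)
           (\<lambda>f g x. f x + g x) (\<lambda>x. 0) (\<lambda>f x. - f x) (\<lambda>c f x. scaleC c (f x))
           (\<lambda>f g x. f x * g x) (\<lambda>f x. star (f x)) (sup_norm X)"
proof -
  note S = assms(3)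
  note closure = zero_in_boxtimes boxtimes_add[OF S] boxtimes_mult[OF S] boxtimes_uminus[OF S]
    boxtimes_star[OF S] boxtimes_scaleC[OF S]
  note norm = boxtimes_sup_norm_eq_0_iff boxtimes_bounded[of _ X S]
    sup_norm_add_le sup_norm_mult_le sup_norm_scaleC sup_norm_cstar
  note pointwise = algebra_simps scaleC_add_right scaleC_add_left scaleC_scaleC scaleC_one
    mult_scaleC_left mult_scaleC_right star_star star_add star_scaleC star_mult
  show ?thesis
    unfolding cstar_algebra_on_def
    by (simp add: closure norm pointwise boxtimes_complete[OF S])
qed

end
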